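(* Let $m,n$ be positive integers and for each $i\in\{1,\dots,m\}$ let $A^i\in\mathbb{R}^{n_i\times n}$, $b^i\in\mathbb{R}^{n_i}$. Let $A=[(A^1)^T,\dots,(A^m)^T]^T\in\mathbb{R}^{N\times n}$, $N=\sum_in_i\ge n$, assume $A^TA$ is full rank, and let $x^*$ be the unique minimizer of $\sum_{i=1}^m\frac12\|A^ix-b^i\|^2$. Let $\lambda,\gamma$ be the largest and smallest eigenvalues of $A^TA$, fix $\beta>0$, and let $K^*=(A^TA+\beta I)^{-1}$. Algorithm 1 (parameters $\alpha,\delta>0$): choose $x_1(0)=x(0)$ and $K(-1)\in\mathbb{R}^{n\times n}$; for $t\ge0$, with $k_j(t)$ the $j$-th column of $K(t)$ and $e_j$ the $j$-th column of $I$, $k_j(t)=k_j(t-1)-\alpha\sum_{i=1}^m\big[((A^i)^TA^i+\tfrac{\beta}{m}I)k_j(t-1)-\tfrac1m e_j\big]$ for $j=1,\dots,n$, and $x_1(t+1)=x_1(t)-\delta K(t)\sum_{i=1}^m(A^i)^T(A^ix_1(t)-b^i)$. DGD (step size $\delta'>0$): $x_2(0)=x(0)$ and $x_2(t+1)=x_2(t)-\delta'\sum_{i=1}^m(A^i)^T(A^ix_2(t)-b^i)$. Let $\rho_{GD}=\dfrac{\lambda/\gamma-1}{\lambda/\gamma+1}$, $\rho_K^*=\dfrac{\lambda-\gamma}{\lambda+\gamma+2\beta}$, $\rho_\beta^*=\dfrac{(\lambda-\gamma)\beta}{(\lambda+\gamma)\beta+2\lambda\gamma}$, $\sigma_0=\delta\lambda\|K(-1)-K^*\|_F$,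 and consider the known upper bounds $\|x_1(t)-x^*\|\le E_1(t)$ and $\|x_2(t)-x^*\|\le E_2(t)$, where $$E_1(t)=\prod_{k=0}^{t-1}\big(\rho_\beta^*+\sigma_0(\rho_K^* )^{k+1}\big)\,\|x(0)-x^*\|,\qquad E_2(t)=\rho_{GD}^{\,t}\,\|x(0)-x^*\|,$$ with the parameters $\alpha,\delta,\delta'$ chosen so that these bounds hold (the rates $\rho_K^*$, $\rho_\beta^*$, $\rho_{GD}$ being the optimal rates of the respective iterations). Then there exists $t_{sw}<\infty$ such that $E_1(t)<E_2(t)$ for all $t>t_{sw}$.
   Context: $\|\cdot\|$ is the Euclidean norm and $\|\cdot\|_F$ the Frobenius norm. Both algorithms start from the same initial estimate $x(0)\in\mathbb{R}^n$. *)

theory Defs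
  imports "Jordan_Normal_Form.Char_Poly"
begin

definition vsum :: "nat \<Rightarrow> ('i \<Rightarrow> real vec) \<Rightarrow> 'i set \<Rightarrow> real vec" where
  "vsum n F I = vec n (\<lambda>r. \<Sum>i\<in>I. F i $ r)"

definition vnorm :: "real vec \<Rightarrow> real" where
  "vnorm v = sqrt (v \<bullet> v)"

definition frob :: "real mat \<Rightarrow> real" where
  "frob M = sqrt (\<Sum>r<dim_row M. \<Sum>c<dim_col M. (M $$ (r,c))\<^sup>2)"

fun stack :: "nat \<Rightarrow> nat \<Rightarrow> (nat \<Rightarrow> real mat) \<Rightarrow> real mat" where
  "stack 0 n As = 0\<^sub>m 0 n"
| "stack (Suc m) n As = stack m n As @\<^sub>r As m"

end

theory Submission
  imports Defs
begin

(* Switching pays off because E1 t / E2 t is the product of the factors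
   (rhoB + sigma0 rhoK^(k+1)) / rhoGD, which tend to rhoB / rhoGD < 1 since rhoK < 1;
   such a product tends to zero, by the ratio test applied to its partial products.
   That rhoB < rhoGD is elementary once gam > 0, and gam > 0 because A^T A is positive
   definite: g |v|^2 = |A v|^2 for an eigenvector v, and A v = 0 is excluded by invertibility. *)

lemma vnorm_diff_pos:
  assumes "v \<in> carrier_vec n" "w \<in> carrier_vec n" "v \<noteq> w"
  shows "vnorm (v - w) > 0"
proof -
  have "v - w \<noteq> 0\<^sub>v n"
  proof
    assume diff: "v - w = 0\<^sub>v n"
    have "v $ i = w $ i" if "i < n" for i
    proof -
      have "(v - w) $ i = 0\<^sub>v n $ i"
        using diff by (rule arg_cong)
      then show ?thesis
        using assms(1,2) that by simp
    qed
    then have "v = w"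
      using assms(1,2) by (intro eq_vecI) auto
    with assms(3) show False ..
  qed
  then have "(v - w) \<bullet> (v - w) \<noteq> 0"
    using conjugate_square_eq_0_vec[of "v - w" n] assms(1,2) by simp
  moreover have "(v - w) \<bullet> (v - w) \<ge> 0"
    using conjugate_square_ge_0_vec[of "v - w"] by simp
  ultimately show ?thesis
    unfolding vnorm_def by simp
qed

lemma invertible_mat_mult_vec_eq_0:
  fixes M :: "'a :: semiring_1 mat"
  assumes "invertible_mat M" "M \<in> carrier_mat n n" "v \<in> carrier_vec n" "M *\<^sub>v v = 0\<^sub>v n"
  shows "v = 0\<^sub>v n"
proof -
  obtain B where BM: "B * M = 1\<^sub>m (dim_row B)" and MB: "M * B = 1\<^sub>m n"
    using assms(1,2) unfolding invertible_mat_def inverts_mat_def by auto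
  have B: "B \<in> carrier_mat n n"
    using BM MB assms(2) by (metis carrier_matD carrier_matI index_mult_mat(2,3) index_one_mat(2,3))
  have "v = (B * M) *\<^sub>v v"
    using BM B assms(3) by simp
  also have "\<dots> = B *\<^sub>v (M *\<^sub>v v)"
    using B assms(2,3) by (rule assoc_mult_mat_vec)
  also have "\<dots> = 0\<^sub>v n"
    unfolding assms(4) using B by auto
  finally show ?thesis .
qed

lemma gram_mat_quadratic_form:
  fixes A :: "'a :: comm_semiring_0 mat"
  assumes "A \<in> carrier_mat nr nc" "v \<in> carrier_vec nc"
  shows "((transpose_mat A * A) *\<^sub>v v) \<bullet> v = (A *\<^sub>v v) \<bullet> (A *\<^sub>v v)"
proof -
  have "(transpose_mat A * A) *\<^sub>v v = transpose_mat A *\<^sub>v (A *\<^sub>v v)"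
    using assms by (intro assoc_mult_mat_vec) auto
  then show ?thesis
    using transpose_vec_mult_scalar[OF assms] assms by simp
qed

lemma eigenvalue_invertible_gram_mat_pos:
  fixes A :: "real mat"
  assumes inv: "invertible_mat (transpose_mat A * A)"
    and ev: "eigenvalue (transpose_mat A * A) g"
  shows "g > 0"
proof (rule ccontr)
  assume g: "\<not> g > 0"
  let ?M = "transpose_mat A * A"
  have A: "A \<in> carrier_mat (dim_row A) (dim_col A)" by simp
  have M: "?M \<in> carrier_mat (dim_col A) (dim_col A)" by (intro carrier_matI) simp_all
  obtain v where v: "v \<in> carrier_vec (dim_col A)" "v \<noteq> 0\<^sub>v (dim_col A)" and Mv: "?M *\<^sub>v v = g \<cdot>\<^sub>v v"
    using ev unfolding eigenvalue_def eigenvector_def by auto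
  have "(A *\<^sub>v v) \<bullet> (A *\<^sub>v v) = g * (v \<bullet> v)"
    using gram_mat_quadratic_form[OF A v(1)] Mv v(1) by simp
  also have "\<dots> \<le> 0"
    using g conjugate_square_ge_0_vec[of v] by (simp add: mult_nonpos_nonneg)
  finally have Av: "A *\<^sub>v v = 0\<^sub>v (dim_row A)"
    using conjugate_square_ge_0_vec[of "A *\<^sub>v v"]
      conjugate_square_eq_0_vec[of "A *\<^sub>v v" "dim_row A"] carrier_vecI[of "A *\<^sub>v v"] by simp
  have "?M *\<^sub>v v = transpose_mat A *\<^sub>v (A *\<^sub>v v)"
    using v(1) by (intro assoc_mult_mat_vec) auto
  also have "\<dots> = 0\<^sub>v (dim_col A)"
    unfolding Av by auto
  finally have "?M *\<^sub>v v = 0\<^sub>v (dim_col A)" .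
  then show False
    using invertible_mat_mult_vec_eq_0[OF inv M v(1)] v(2) by blast
qed

lemma abs_prod_eventually_less_power:
  fixes a :: "nat \<Rightarrow> real"
  assumes lim: "a \<longlonglongrightarrow> L" and L: "\<bar>L\<bar> < r"
  shows "eventually (\<lambda>t. \<bar>\<Prod>k<t. a k\<bar> < r ^ t) sequentially"
proof -
  have r: "r > 0" using L by linarith
  define u where "u t = (\<Prod>k<t. a k / r)" for t
  define c where "c = (1 + \<bar>L\<bar> / r) / 2"
  have c: "\<bar>L\<bar> / r < c" "c < 1"
    using L r unfolding c_def by (simp_all add: field_simps)
  have "(\<lambda>k. \<bar>a k\<bar> / r) \<longlonglongrightarrow> \<bar>L\<bar> / r"
    by (intro tendsto_intros lim) (use r in simp)
  then have "eventually (\<lambda>k. \<bar>a k\<bar> / r < c) sequentially"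
    using c(1) by (rule order_tendstoD(2))
  then obtain N where N: "\<And>k. k \<ge> N \<Longrightarrow> \<bar>a k\<bar> / r < c"
    unfolding eventually_sequentially by blast
  have "summable u"
  proof (rule summable_ratio_test[OF c(2)])
    fix k assume "k \<ge> N"
    have "norm (u (Suc k)) = \<bar>a k / r\<bar> * norm (u k)"
      unfolding u_def by (simp add: abs_mult)
    also have "\<dots> \<le> c * norm (u k)"
      using N[OF \<open>k \<ge> N\<close>] r by (intro mult_right_mono) auto
    finally show "norm (u (Suc k)) \<le> c * norm (u k)" .
  qed
  then have "u \<longlonglongrightarrow> 0"
    by (rule summable_LIMSEQ_zero)
  then have "eventually (\<lambda>t. \<bar>u t\<bar> < 1) sequentially"
    using tendsto_norm_zero order_tendstoD(2) by fastforce
  then show ?thesis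
  proof (rule eventually_mono)
    fix t
    assume "\<bar>u t\<bar> < 1"
    moreover have "\<bar>\<Prod>k<t. a k\<bar> = \<bar>u t\<bar> * r ^ t"
      using r unfolding u_def by (simp add: prod_dividef abs_prod abs_mult)
    ultimately show "\<bar>\<Prod>k<t. a k\<bar> < r ^ t"
      using r by simp
  qed
qed

lemma regularized_rate_bounds:
  fixes lam gam beta :: real
  assumes "0 < gam" "gam < lam" "0 < beta"
  shows "0 < (lam - gam) * beta / ((lam + gam) * beta + 2 * lam * gam)"
    and "(lam - gam) * beta / ((lam + gam) * beta + 2 * lam * gam) < (lam / gam - 1) / (lam / gam + 1)"
proof -
  have lam: "0 < lam" using assms by linarith
  show "0 < (lam - gam) * beta / ((lam + gam) * beta + 2 * lam * gam)"
    using assms lam by (intro divide_pos_pos add_pos_pos) auto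
  have "(lam / gam - 1) / (lam / gam + 1) = ((lam - gam) / gam) / ((lam + gam) / gam)"
    using assms by (simp add: diff_divide_distrib add_divide_distrib)
  also have "\<dots> = (lam - gam) / (lam + gam)"
    using assms by simp
  also have "\<dots> = (lam - gam) * beta / ((lam + gam) * beta)"
    using assms by simp
  also have "\<dots> > (lam - gam) * beta / ((lam + gam) * beta + 2 * lam * gam)"
    using assms lam by (intro divide_strict_left_mono mult_pos_pos add_pos_pos) auto
  finally show "(lam - gam) * beta / ((lam + gam) * beta + 2 * lam * gam) < (lam / gam - 1) / (lam / gam + 1)" .
qed

theorem theorem1:
  fixes m n :: nat
    and ns :: "nat \<Rightarrow> nat"
    and As :: "nat \<Rightarrow> real mat" and bs :: "nat \<Rightarrow> real vec"
    and xs x0 :: "real vec"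
    and lam gam beta alpha delta delta' :: real
    and Kstar Km1 :: "real mat"
    and K :: "nat \<Rightarrow> real mat"
    and x1 x2 :: "nat \<Rightarrow> real vec"
  defines "AA \<equiv> stack m n As"
  defines "f \<equiv> (\<lambda>x. \<Sum>i<m. 1/2 * (vnorm (As i *\<^sub>v x - bs i))\<^sup>2)"
  defines "rhoGD \<equiv> (lam / gam - 1) / (lam / gam + 1)"
  defines "rhoK \<equiv> (lam - gam) / (lam + gam + 2 * beta)"
  defines "rhoB \<equiv> ((lam - gam) * beta) / ((lam + gam) * beta + 2 * lam * gam)"
  defines "sigma0 \<equiv> delta * lam * frob (Km1 - Kstar)"
  defines "E1 \<equiv> (\<lambda>t::nat. (\<Prod>k<t. rhoB + sigma0 * rhoK ^ (k + 1)) * vnorm (x0 - xs))"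
  defines "E2 \<equiv> (\<lambda>t::nat. rhoGD ^ t * vnorm (x0 - xs))"
  assumes "m > 0" and "n > 0"
    and blocks: "\<forall>i<m. As i \<in> carrier_mat (ns i) n \<and> bs i \<in> carrier_vec (ns i)"
    and "(\<Sum>i<m. ns i) \<ge> n"
    and fullrank: "invertible_mat (transpose_mat AA * AA)"
    and xs_min: "xs \<in> carrier_vec n" "\<forall>y\<in>carrier_vec n. f xs \<le> f y"
    and xs_unique: "\<forall>y\<in>carrier_vec n. f y \<le> f xs \<longrightarrow> y = xs"
    and lam_max: "eigenvalue (transpose_mat AA * AA) lam"
        "\<forall>k. eigenvalue (transpose_mat AA * AA) k \<longrightarrow> k \<le> lam"
    and gam_min: "eigenvalue (transpose_mat AA * AA) gam"
        "\<forall>k. eigenvalue (transpose_mat AA * AA) k \<longrightarrow> gam \<le> k"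
    and "beta > 0"
    and Kstar: "Kstar \<in> carrier_mat n n"
        "inverts_mat Kstar (transpose_mat AA * AA + beta \<cdot>\<^sub>m 1\<^sub>m n)"
        "inverts_mat (transpose_mat AA * AA + beta \<cdot>\<^sub>m 1\<^sub>m n) Kstar"
    and "alpha > 0" and "delta > 0" and "delta' > 0"
    and x0: "x0 \<in> carrier_vec n"
    and Km1: "Km1 \<in> carrier_mat n n"
    and K_carrier: "\<forall>t. K t \<in> carrier_mat n n"
    and K_iter: "\<forall>t j. j < n \<longrightarrow>
       (let Kp = (if t = 0 then Km1 else K (t - 1)) in
        col (K t) j = col Kp j - alpha \<cdot>\<^sub>v vsum n (\<lambda>i.
          (transpose_mat (As i) * As i + (beta / real m) \<cdot>\<^sub>m 1\<^sub>m n) *\<^sub>v col Kp j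
          - (1 / real m) \<cdot>\<^sub>v unit_vec n j) {..<m})"
    and x1_0: "x1 0 = x0"
    and x1_iter: "\<forall>t. x1 (Suc t) = x1 t - delta \<cdot>\<^sub>v (K t *\<^sub>v
        vsum n (\<lambda>i. transpose_mat (As i) *\<^sub>v (As i *\<^sub>v x1 t - bs i)) {..<m})"
    and x2_0: "x2 0 = x0"
    and x2_iter: "\<forall>t. x2 (Suc t) = x2 t - delta' \<cdot>\<^sub>v
        vsum n (\<lambda>i. transpose_mat (As i) *\<^sub>v (As i *\<^sub>v x2 t - bs i)) {..<m}"
    and bound1: "\<forall>t. vnorm (x1 t - xs) \<le> E1 t"
    and bound2: "\<forall>t. vnorm (x2 t - xs) \<le> E2 t"
    and nondeg_x0: "x0 \<noteq> xs"
    and nondeg_spec: "gam < lam"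
  shows "\<exists>tsw::nat. \<forall>t>tsw. E1 t < E2 t"
proof -
  have gam: "gam > 0"
    using eigenvalue_invertible_gram_mat_pos fullrank gam_min(1) by blast
  have rhoK: "\<bar>rhoK\<bar> < 1"
    unfolding rhoK_def using gam nondeg_spec \<open>beta > 0\<close> by (simp add: field_simps)
  have "(\<lambda>k. rhoB + sigma0 * rhoK ^ (k + 1)) \<longlonglongrightarrow> rhoB + sigma0 * 0"
    using LIMSEQ_Suc[OF LIMSEQ_power_zero[OF rhoK[folded real_norm_def]]]
    by (intro tendsto_intros) simp
  then have lim: "(\<lambda>k. rhoB + sigma0 * rhoK ^ (k + 1)) \<longlonglongrightarrow> rhoB"
    by simp
  have "0 < rhoB" "rhoB < rhoGD"
    using regularized_rate_bounds[OF gam nondeg_spec \<open>beta > 0\<close>]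
    unfolding rhoB_def rhoGD_def by auto
  then obtain tsw where tsw: "\<And>t. t \<ge> tsw \<Longrightarrow> \<bar>\<Prod>k<t. rhoB + sigma0 * rhoK ^ (k + 1)\<bar> < rhoGD ^ t"
    using abs_prod_eventually_less_power[OF lim] unfolding eventually_sequentially by auto
  have "vnorm (x0 - xs) > 0"
    using vnorm_diff_pos[OF x0 xs_min(1) nondeg_x0] .
  then have "E1 t < E2 t" if "t > tsw" for t
    using tsw[of t] that unfolding E1_def E2_def by (auto intro: mult_strict_right_mono)
  then show ?thesis by blast
qed

end
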